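(* Let $\mathcal T$ be a theory of $\mathsf{LGI}$, let $\alpha,\beta$ be basic expressions and $c,d\in[0,1]$. If every element of $\tau(\alpha,c)$ and every element of $\tau(\beta,d)$ is provable from $\mathcal T$ in $\mathsf{LGI}$, then so is every element of each of the sets $\tau(\alpha\land\beta,\min(c,d))$, $\tau(\alpha\lor\beta,\max(c,d))$, $\tau(\alpha\odot\beta,c\odot d)$ and $\tau(\sim\alpha,1-c)$.
   Context: Fix a continuous t-norm $\odot$ on $[0,1]$ and let $c\oplus d = 1-((1-c)\odot(1-d))$. Write $c\odot_{\L} d=\max(c+d-1,0)$, $c\oplus_{\L} d=\min(c+d,1)$. Syntax of $\mathsf{LGI}$: countably many variables $\phi_0,\phi_1,\dots$ and constants $\bot,\top$. Basic expressions are built from variables and constants by binary $\land,\lor,\odot$ and unary $\sim$. A graded implication is written $\alpha\Rightarrow_c\beta$ with $\alpha,\beta$ basic expressions, $c\in[0,1]$. Formulas are built from graded implications by classical $\land,\lor,\lnot$; $\Phi\to\Psi$ abbreviates $\lnot\Phi\lor\Psi$. A theory is a set of formulas. For a basic expression $\alpha$ and $c\in[0,1]$, $\tau(\alpha,c)=\{\top\Rightarrow_t\alpha : t\in[0,1],\ t<c\}\cup\{\alpha\Rightarrow_{1-t}\bot : t\in[0,1],\ t>c\}$. Calculus $\mathsf{LGI}$: axioms are (i) all substitution instances (by graded implications) of classical propositional tautologies; (ii) for all basic expressions $\alpha,\beta,\gamma$ and $c,d\in[0,1]$: ($\land_1$) $(\alpha\Rightarrow_d\beta)\land(\alpha\Rightarrow_d\gamma)\to(\alpha\Rightarrow_d\beta\land\gamma)$;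 ($\land_2$) $\alpha\land\beta\Rightarrow_1\alpha$; ($\land_3$) $\alpha\land\beta\Rightarrow_1\beta$; ($\lor_1$) $(\alpha\Rightarrow_d\gamma)\land(\beta\Rightarrow_d\gamma)\to(\alpha\lor\beta\Rightarrow_d\gamma)$; ($\lor_2$) $\alpha\Rightarrow_1\alpha\lor\beta$; ($\lor_3$) $\beta\Rightarrow_1\alpha\lor\beta$; ($\odot_1$) $(\top\Rightarrow_c\alpha)\land(\top\Rightarrow_d\beta)\to(\top\Rightarrow_{c\odot d}\alpha\odot\beta)$; ($\odot_2$) $(\alpha\Rightarrow_c\bot)\land(\beta\Rightarrow_d\bot)\to(\alpha\odot\beta\Rightarrow_{c\oplus d}\bot)$; ($\odot_3$) $\top\Rightarrow_1\top\odot\top$; ($\sim_1$) $(\alpha\Rightarrow_d\beta)\to(\sim\beta\Rightarrow_d\sim\alpha)$; ($\sim_2$) $\sim\sim\alpha\Rightarrow_1\alpha$; ($\sim_3$) $\alpha\Rightarrow_1\sim\sim\alpha$; ($\top$) $\alpha\Rightarrow_1\top$; ($\bot$) $\bot\Rightarrow_1\alpha$; (0) $\alpha\Rightarrow_0\beta$; ($c$) $\alpha\Rightarrow_c\alpha$; (inkons) $\lnot(\top\Rightarrow_c\bot)$ for $c>0$; (trans$_1$) $(\alpha\Rightarrow_c\beta)\land(\beta\Rightarrow_d\gamma)\to(\alpha\Rightarrow_{c\odot_{\L}d}\gamma)$; (trans$_2$) $(\alpha\Rightarrow_c\bot)\land(\top\Rightarrow_d\beta)\to(\alpha\Rightarrow_{c\oplus_{\L}d}\beta)$;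 (lin$_1$) $(\alpha\Rightarrow_1\beta)\lor(\beta\Rightarrow_1\alpha)$; (lin$_2$) $(\top\Rightarrow_d\alpha)\lor(\alpha\Rightarrow_{1-d}\bot)$. The only rule is modus ponens. $\mathcal T\vdash_{\mathsf{LGI}}\Phi$ means $\Phi$ has a finite derivation from axioms and elements of $\mathcal T$ by modus ponens. *)

theory Defs
  imports "HOL-Analysis.Analysis"
begin

definition continuous_tnorm :: "(real \<Rightarrow> real \<Rightarrow> real) \<Rightarrow> bool" where
  "continuous_tnorm tn \<longleftrightarrow>
     (\<forall>x\<in>{0..1}. \<forall>y\<in>{0..1}. tn x y \<in> {0..1}) \<and>
     (\<forall>x\<in>{0..1}. \<forall>y\<in>{0..1}. tn x y = tn y x) \<and>
     (\<forall>x\<in>{0..1}. \<forall>y\<in>{0..1}. \<forall>z\<in>{0..1}. tn (tn x y) z = tn x (tn y z)) \<and>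
     (\<forall>x\<in>{0..1}. \<forall>y\<in>{0..1}. \<forall>z\<in>{0..1}. x \<le> y \<longrightarrow> tn x z \<le> tn y z) \<and>
     (\<forall>x\<in>{0..1}. tn x 1 = x) \<and>
     continuous_on ({0..1} \<times> {0..1}) (\<lambda>(x, y). tn x y)"

definition tconorm :: "(real \<Rightarrow> real \<Rightarrow> real) \<Rightarrow> real \<Rightarrow> real \<Rightarrow> real" where
  "tconorm tn c d = 1 - tn (1 - c) (1 - d)"

definition luk_and :: "real \<Rightarrow> real \<Rightarrow> real" where
  "luk_and c d = max (c + d - 1) 0"

definition luk_or :: "real \<Rightarrow> real \<Rightarrow> real" where
  "luk_or c d = min (c + d) 1"

datatype bexp = Var nat | Bot | Top
  | BAnd bexp bexp | BOr bexp bexp | BOdot bexp bexp | BNeg bexp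

text \<open>Formulas: classical combinations of graded implications GImp a c b, i.e. a =>_c b.\<close>
datatype fm = GImp bexp real bexp | FAnd fm fm | FOr fm fm | FNot fm

definition FImp :: "fm \<Rightarrow> fm \<Rightarrow> fm" where
  "FImp P Q = FOr (FNot P) Q"

fun wf_fm :: "fm \<Rightarrow> bool" where
  "wf_fm (GImp a c b) = (0 \<le> c \<and> c \<le> 1)"
| "wf_fm (FAnd P Q) = (wf_fm P \<and> wf_fm Q)"
| "wf_fm (FOr P Q) = (wf_fm P \<and> wf_fm Q)"
| "wf_fm (FNot P) = wf_fm P"

fun ceval :: "(bexp \<Rightarrow> real \<Rightarrow> bexp \<Rightarrow> bool) \<Rightarrow> fm \<Rightarrow> bool" where
  "ceval v (GImp a c b) = v a c b"
| "ceval v (FAnd P Q) = (ceval v P \<and> ceval v Q)"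
| "ceval v (FOr P Q) = (ceval v P \<or> ceval v Q)"
| "ceval v (FNot P) = (\<not> ceval v P)"

text \<open>Substitution instances (by graded implications) of classical tautologies
  are exactly the formulas true under every valuation of their atoms.\<close>
definition ctaut :: "fm \<Rightarrow> bool" where
  "ctaut P \<longleftrightarrow> (\<forall>v. ceval v P)"

inductive derivable :: "(real \<Rightarrow> real \<Rightarrow> real) \<Rightarrow> fm set \<Rightarrow> fm \<Rightarrow> bool"
  for tn :: "real \<Rightarrow> real \<Rightarrow> real" and Th :: "fm set" where
  hyp: "P \<in> Th \<Longrightarrow> derivable tn Th P"
| taut: "wf_fm P \<Longrightarrow> ctaut P \<Longrightarrow> derivable tn Th P"
| and1: "d \<in> {0..1} \<Longrightarrow>
    derivable tn Th (FImp (FAnd (GImp a d b) (GImp a d g)) (GImp a d (BAnd b g)))"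
| and2: "derivable tn Th (GImp (BAnd a b) 1 a)"
| and3: "derivable tn Th (GImp (BAnd a b) 1 b)"
| or1: "d \<in> {0..1} \<Longrightarrow>
    derivable tn Th (FImp (FAnd (GImp a d g) (GImp b d g)) (GImp (BOr a b) d g))"
| or2: "derivable tn Th (GImp a 1 (BOr a b))"
| or3: "derivable tn Th (GImp b 1 (BOr a b))"
| odot1: "c \<in> {0..1} \<Longrightarrow> d \<in> {0..1} \<Longrightarrow>
    derivable tn Th (FImp (FAnd (GImp Top c a) (GImp Top d b)) (GImp Top (tn c d) (BOdot a b)))"
| odot2: "c \<in> {0..1} \<Longrightarrow> d \<in> {0..1} \<Longrightarrow>
    derivable tn Th (FImp (FAnd (GImp a c Bot) (GImp b d Bot)) (GImp (BOdot a b) (tconorm tn c d) Bot))"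
| odot3: "derivable tn Th (GImp Top 1 (BOdot Top Top))"
| neg1: "d \<in> {0..1} \<Longrightarrow> derivable tn Th (FImp (GImp a d b) (GImp (BNeg b) d (BNeg a)))"
| neg2: "derivable tn Th (GImp (BNeg (BNeg a)) 1 a)"
| neg3: "derivable tn Th (GImp a 1 (BNeg (BNeg a)))"
| top: "derivable tn Th (GImp a 1 Top)"
| bot: "derivable tn Th (GImp Bot 1 a)"
| zero: "derivable tn Th (GImp a 0 b)"
| refl: "c \<in> {0..1} \<Longrightarrow> derivable tn Th (GImp a c a)"
| inkons: "c \<in> {0..1} \<Longrightarrow> c > 0 \<Longrightarrow> derivable tn Th (FNot (GImp Top c Bot))"
| trans1: "c \<in> {0..1} \<Longrightarrow> d \<in> {0..1} \<Longrightarrow>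
    derivable tn Th (FImp (FAnd (GImp a c b) (GImp b d g)) (GImp a (luk_and c d) g))"
| trans2: "c \<in> {0..1} \<Longrightarrow> d \<in> {0..1} \<Longrightarrow>
    derivable tn Th (FImp (FAnd (GImp a c Bot) (GImp Top d b)) (GImp a (luk_or c d) b))"
| lin1: "derivable tn Th (FOr (GImp a 1 b) (GImp b 1 a))"
| lin2: "d \<in> {0..1} \<Longrightarrow> derivable tn Th (FOr (GImp Top d a) (GImp a (1 - d) Bot))"
| mp: "derivable tn Th P \<Longrightarrow> derivable tn Th (FImp P Q) \<Longrightarrow> derivable tn Th Q"

definition tau :: "bexp \<Rightarrow> real \<Rightarrow> fm set" where
  "tau a c = {GImp Top t a | t. t \<in> {0..1} \<and> t < c}
           \<union> {GImp a (1 - t) Bot | t. t \<in> {0..1} \<and> t > c}"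

end

theory Submission
  imports Defs
begin

text \<open>The bounds for \<open>\<and>\<close>, \<open>\<or>\<close> and \<open>\<sim>\<close> follow directly from the axioms for these
  connectives together with the transitivity axiom, which lets one move a grade along an
  implication of grade 1.  For \<open>\<odot>\<close> the axioms only give the grades \<open>x \<odot> y\<close> for grades
  \<open>x, y\<close> already known for \<open>\<alpha>, \<beta>\<close>, i.e. strictly below (resp. above) \<open>c, d\<close>; continuity
  of the t-norm makes \<open>x \<odot> y\<close> come arbitrarily close to \<open>c \<odot> d\<close>, and weakening the
  grade then reaches every bound strictly beyond \<open>c \<odot> d\<close>.\<close>

lemma continuous_tnorm_closed:
  "continuous_tnorm tn \<Longrightarrow> x \<in> {0..1} \<Longrightarrow> y \<in> {0..1} \<Longrightarrow> tn x y \<in> {0..1}"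
  unfolding continuous_tnorm_def by blast

lemma continuous_tnorm_near:
  assumes T: "continuous_tnorm tn" and c: "c \<in> {0..1}" and d: "d \<in> {0..1}" and e: "\<epsilon> > 0"
  shows "\<exists>r>0. \<forall>x\<in>{0..1}. \<forall>y\<in>{0..1}. \<bar>x - c\<bar> < r \<longrightarrow> \<bar>y - d\<bar> < r
            \<longrightarrow> \<bar>tn x y - tn c d\<bar> < \<epsilon>"
proof -
  have "continuous_on ({0..1} \<times> {0..1}) (\<lambda>(x, y). tn x y)"
    using T unfolding continuous_tnorm_def by blast
  moreover have "(c, d) \<in> {0..1::real} \<times> {0..1::real}" using c d by auto
  ultimately obtain \<delta> where \<delta>: "\<delta> > 0" and near: "\<forall>p\<in>{0..1} \<times> {0..1}. dist p (c, d) < \<delta> \<longrightarrow>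
      dist ((\<lambda>(x, y). tn x y) p) ((\<lambda>(x, y). tn x y) (c, d)) < \<epsilon>"
    using e unfolding continuous_on_iff by meson
  show ?thesis
  proof (intro exI[of _ "\<delta>/2"] conjI ballI impI)
    fix x y :: real assume x: "x \<in> {0..1}" and y: "y \<in> {0..1}"
      and hx: "\<bar>x - c\<bar> < \<delta>/2" and hy: "\<bar>y - d\<bar> < \<delta>/2"
    have "dist (x, y) (c, d) \<le> \<bar>x - c\<bar> + \<bar>y - d\<bar>"
      unfolding dist_Pair_Pair dist_real_def by (metis power2_abs sqrt_sum_squares_le_sum_abs)
    also have "\<dots> < \<delta>" using hx hy by simp
    finally show "\<bar>tn x y - tn c d\<bar> < \<epsilon>"
      using near x y by (auto simp: dist_real_def)
  qed (use \<delta> in simp)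
qed

lemma continuous_tnorm_approx_below:
  assumes T: "continuous_tnorm tn" and c: "c \<in> {0..1}" and d: "d \<in> {0..1}"
    and t: "t < tn c d"
  shows "\<exists>x\<in>{0..1}. \<exists>y\<in>{0..1}. (x < c \<or> x = 0) \<and> (y < d \<or> y = 0) \<and> t \<le> tn x y"
proof -
  obtain r where r: "r > 0" and near: "\<forall>x\<in>{0..1}. \<forall>y\<in>{0..1}. \<bar>x - c\<bar> < r \<longrightarrow>
      \<bar>y - d\<bar> < r \<longrightarrow> \<bar>tn x y - tn c d\<bar> < tn c d - t"
    using continuous_tnorm_near[OF T c d, of "tn c d - t"] t by auto
  define x where "x = max 0 (c - r/2)"
  define y where "y = max 0 (d - r/2)"
  have x: "x \<in> {0..1}" "x < c \<or> x = 0" "\<bar>x - c\<bar> < r" using c r unfolding x_def by auto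
  have y: "y \<in> {0..1}" "y < d \<or> y = 0" "\<bar>y - d\<bar> < r" using d r unfolding y_def by auto
  have "\<bar>tn x y - tn c d\<bar> < tn c d - t" using near x y by blast
  then have "t \<le> tn x y" by linarith
  with x y show ?thesis by blast
qed

lemma continuous_tnorm_approx_above:
  assumes T: "continuous_tnorm tn" and c: "c \<in> {0..1}" and d: "d \<in> {0..1}"
    and t: "tn c d < t"
  shows "\<exists>x\<in>{0..1}. \<exists>y\<in>{0..1}. (c < x \<or> x = 1) \<and> (d < y \<or> y = 1) \<and> tn x y \<le> t"
proof -
  obtain r where r: "r > 0" and near: "\<forall>x\<in>{0..1}. \<forall>y\<in>{0..1}. \<bar>x - c\<bar> < r \<longrightarrow>
      \<bar>y - d\<bar> < r \<longrightarrow> \<bar>tn x y - tn c d\<bar> < t - tn c d"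
    using continuous_tnorm_near[OF T c d, of "t - tn c d"] t by auto
  define x where "x = min 1 (c + r/2)"
  define y where "y = min 1 (d + r/2)"
  have x: "x \<in> {0..1}" "c < x \<or> x = 1" "\<bar>x - c\<bar> < r" using c r unfolding x_def by auto
  have y: "y \<in> {0..1}" "d < y \<or> y = 1" "\<bar>y - d\<bar> < r" using d r unfolding y_def by auto
  have "\<bar>tn x y - tn c d\<bar> < t - tn c d" using near x y by blast
  then have "tn x y \<le> t" by linarith
  with x y show ?thesis by blast
qed

lemma ball_tau_iff:
  "(\<forall>P\<in>tau a c. derivable tn Th P) \<longleftrightarrow>
     (\<forall>t\<in>{0..1}. t < c \<longrightarrow> derivable tn Th (GImp Top t a)) \<and>
     (\<forall>t\<in>{0..1}. c < t \<longrightarrow> derivable tn Th (GImp a (1 - t) Bot))"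
  unfolding tau_def by blast

locale lgi_theory =
  fixes tn :: "real \<Rightarrow> real \<Rightarrow> real" and Th :: "fm set"
  assumes continuous_tnorm: "continuous_tnorm tn"
    and wf_theory: "\<forall>P\<in>Th. wf_fm P"
begin

lemma derivable_wf_fm: "derivable tn Th P \<Longrightarrow> wf_fm P"
proof (induction rule: derivable.induct)
  case (odot1 c d a b)
  then show ?case using continuous_tnorm_closed[OF continuous_tnorm] by (auto simp: FImp_def)
next
  case (odot2 c d a b)
  then have "tn (1 - c) (1 - d) \<in> {0..1}"
    using continuous_tnorm_closed[OF continuous_tnorm] by auto
  then show ?case using odot2 by (auto simp: FImp_def tconorm_def)
qed (use wf_theory in \<open>auto simp: FImp_def luk_and_def luk_or_def\<close>)

lemma derivable_grade_bounds: "derivable tn Th (GImp a c b) \<Longrightarrow> c \<in> {0..1}"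
  using derivable_wf_fm by fastforce

lemma derivable_mp_conj:
  assumes A: "derivable tn Th A" and B: "derivable tn Th B"
    and AB: "derivable tn Th (FImp (FAnd A B) C)"
  shows "derivable tn Th C"
proof -
  let ?taut = "FImp A (FImp B (FImp (FImp (FAnd A B) C) C))"
  have "wf_fm ?taut"
    using derivable_wf_fm[OF A] derivable_wf_fm[OF AB] by (simp add: FImp_def)
  moreover have "ctaut ?taut" by (simp add: ctaut_def FImp_def)
  ultimately have "derivable tn Th ?taut" by (rule derivable.taut)
  then show ?thesis using A B AB by (meson derivable.mp)
qed

lemma derivable_trans:
  assumes ab: "derivable tn Th (GImp a c b)" and bg: "derivable tn Th (GImp b d g)"
  shows "derivable tn Th (GImp a (luk_and c d) g)"
  using derivable_mp_conj[OF ab bg derivable.trans1]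
    derivable_grade_bounds[OF ab] derivable_grade_bounds[OF bg] by blast

lemma derivable_trans_one_left:
  assumes "derivable tn Th (GImp a 1 b)" and bg: "derivable tn Th (GImp b d g)"
  shows "derivable tn Th (GImp a d g)"
  using derivable_trans[OF assms] derivable_grade_bounds[OF bg] by (simp add: luk_and_def)

lemma derivable_trans_one_right:
  assumes ab: "derivable tn Th (GImp a c b)" and "derivable tn Th (GImp b 1 g)"
  shows "derivable tn Th (GImp a c g)"
  using derivable_trans[OF assms] derivable_grade_bounds[OF ab] by (simp add: luk_and_def)

lemma derivable_weaken:
  assumes ab: "derivable tn Th (GImp a c b)" and "0 \<le> c'" "c' \<le> c"
  shows "derivable tn Th (GImp a c' b)"
proof -
  have c: "c \<le> 1" using derivable_grade_bounds[OF ab] by simp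
  have "derivable tn Th (GImp b (1 - c + c') b)"
    by (rule derivable.refl) (use assms c in auto)
  from derivable_trans[OF ab this] show ?thesis
    using assms c by (simp add: luk_and_def)
qed

lemma derivable_contrapos:
  assumes ab: "derivable tn Th (GImp a d b)"
  shows "derivable tn Th (GImp (BNeg b) d (BNeg a))"
  using derivable.mp[OF ab derivable.neg1] derivable_grade_bounds[OF ab] by blast

lemma derivable_Top_BNeg_Bot: "derivable tn Th (GImp Top 1 (BNeg Bot))"
  using derivable_trans_one_left[OF derivable.neg3 derivable_contrapos[OF derivable.bot]] .

lemma derivable_BNeg_Top_Bot: "derivable tn Th (GImp (BNeg Top) 1 Bot)"
  using derivable_trans_one_right[OF derivable_contrapos[OF derivable.top] derivable.neg2] .

lemma tau_BAnd:
  assumes "\<forall>P\<in>tau a c. derivable tn Th P" and "\<forall>P\<in>tau b d. derivable tn Th P"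
  shows "\<forall>P\<in>tau (BAnd a b) (min c d). derivable tn Th P"
  unfolding ball_tau_iff
proof (intro conjI ballI impI)
  fix t :: real assume "t \<in> {0..1}" "t < min c d"
  then show "derivable tn Th (GImp Top t (BAnd a b))"
    using derivable_mp_conj[OF _ _ derivable.and1] assms by (auto simp: ball_tau_iff)
next
  fix t :: real assume "t \<in> {0..1}" "min c d < t"
  then consider "derivable tn Th (GImp a (1 - t) Bot)" | "derivable tn Th (GImp b (1 - t) Bot)"
    using assms by (auto simp: ball_tau_iff min_less_iff_disj)
  then show "derivable tn Th (GImp (BAnd a b) (1 - t) Bot)"
    by cases (auto intro: derivable_trans_one_left derivable.and2 derivable.and3)
qed

lemma tau_BOr:
  assumes "\<forall>P\<in>tau a c. derivable tn Th P" and "\<forall>P\<in>tau b d. derivable tn Th P"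
  shows "\<forall>P\<in>tau (BOr a b) (max c d). derivable tn Th P"
  unfolding ball_tau_iff
proof (intro conjI ballI impI)
  fix t :: real assume "t \<in> {0..1}" "t < max c d"
  then consider "derivable tn Th (GImp Top t a)" | "derivable tn Th (GImp Top t b)"
    using assms by (auto simp: ball_tau_iff less_max_iff_disj)
  then show "derivable tn Th (GImp Top t (BOr a b))"
    by cases (auto intro: derivable_trans_one_right derivable.or2 derivable.or3)
next
  fix t :: real assume "t \<in> {0..1}" "max c d < t"
  then show "derivable tn Th (GImp (BOr a b) (1 - t) Bot)"
    using derivable_mp_conj[OF _ _ derivable.or1] assms by (auto simp: ball_tau_iff)
qed

lemma tau_BNeg:
  assumes "\<forall>P\<in>tau a c. derivable tn Th P"
  shows "\<forall>P\<in>tau (BNeg a) (1 - c). derivable tn Th P"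
  unfolding ball_tau_iff
proof (intro conjI ballI impI)
  fix t :: real assume "t \<in> {0..1}" "t < 1 - c"
  then have "derivable tn Th (GImp a t Bot)"
    using assms by (auto simp: ball_tau_iff dest: bspec[of _ _ "1 - t"])
  then show "derivable tn Th (GImp Top t (BNeg a))"
    by (intro derivable_trans_one_left[OF derivable_Top_BNeg_Bot] derivable_contrapos)
next
  fix t :: real assume "t \<in> {0..1}" "1 - c < t"
  then have "derivable tn Th (GImp Top (1 - t) a)"
    using assms by (auto simp: ball_tau_iff)
  then show "derivable tn Th (GImp (BNeg a) (1 - t) Bot)"
    by (intro derivable_trans_one_right[OF _ derivable_BNeg_Top_Bot] derivable_contrapos)
qed

lemma tau_BOdot:
  assumes c: "c \<in> {0..1}" and d: "d \<in> {0..1}"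
    and A: "\<forall>P\<in>tau a c. derivable tn Th P" and B: "\<forall>P\<in>tau b d. derivable tn Th P"
  shows "\<forall>P\<in>tau (BOdot a b) (tn c d). derivable tn Th P"
  unfolding ball_tau_iff
proof (intro conjI ballI impI)
  fix t :: real assume t: "t \<in> {0..1}" "t < tn c d"
  then obtain x y where x: "x \<in> {0..1}" "x < c \<or> x = 0" and y: "y \<in> {0..1}" "y < d \<or> y = 0"
    and le: "t \<le> tn x y"
    using continuous_tnorm_approx_below[OF continuous_tnorm c d] by blast
  \<comment> \<open>grade 0 is always available by axiom (0)\<close>
  have "derivable tn Th (GImp Top x a)" "derivable tn Th (GImp Top y b)"
    using x y A B derivable.zero by (auto simp: ball_tau_iff)
  then have "derivable tn Th (GImp Top (tn x y) (BOdot a b))"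
    using derivable_mp_conj[OF _ _ derivable.odot1] x y by blast
  then show "derivable tn Th (GImp Top t (BOdot a b))"
    using derivable_weaken le t by auto
next
  fix t :: real assume t: "t \<in> {0..1}" "tn c d < t"
  then obtain x y where x: "x \<in> {0..1}" "c < x \<or> x = 1" and y: "y \<in> {0..1}" "d < y \<or> y = 1"
    and le: "tn x y \<le> t"
    using continuous_tnorm_approx_above[OF continuous_tnorm c d] by blast
  have "derivable tn Th (GImp a (1 - x) Bot)" "derivable tn Th (GImp b (1 - y) Bot)"
    using x y A B derivable.zero by (auto simp: ball_tau_iff)
  then have "derivable tn Th (GImp (BOdot a b) (tconorm tn (1 - x) (1 - y)) Bot)"
    using derivable_mp_conj[OF _ _ derivable.odot2] x y by auto
  then show "derivable tn Th (GImp (BOdot a b) (1 - t) Bot)"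
    using derivable_weaken le t by (auto simp: tconorm_def)
qed

end

theorem mainTheorem3:
  fixes tn :: "real \<Rightarrow> real \<Rightarrow> real" and Th :: "fm set"
    and a b :: bexp and c d :: real
  assumes "continuous_tnorm tn"
    and "\<forall>P\<in>Th. wf_fm P"
    and "c \<in> {0..1}" and "d \<in> {0..1}"
    and "\<forall>P\<in>tau a c. derivable tn Th P"
    and "\<forall>P\<in>tau b d. derivable tn Th P"
  shows "(\<forall>P\<in>tau (BAnd a b) (min c d). derivable tn Th P)
       \<and> (\<forall>P\<in>tau (BOr a b) (max c d). derivable tn Th P)
       \<and> (\<forall>P\<in>tau (BOdot a b) (tn c d). derivable tn Th P)
       \<and> (\<forall>P\<in>tau (BNeg a) (1 - c). derivable tn Th P)"
proof -
  interpret lgi_theory tn Th using assms(1,2) by unfold_locales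
  show ?thesis
    using tau_BAnd[OF assms(5,6)] tau_BOr[OF assms(5,6)]
      tau_BOdot[OF assms(3-6)] tau_BNeg[OF assms(5)] by blast
qed

end
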